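(* Let $\psi$ be a 3-CNF formula and let $F_\psi$ be the signed digraph constructed from it as described in the context. Then $\psi$ is not satisfiable if and only if every Boolean network on $F_\psi$ is synchronizing.
   Context: $\psi$ is a 3-CNF formula over variables $\lambda_1,\dots,\lambda_n$ ($n\ge 2$) with clauses $\mu_1,\dots,\mu_m$ ($m\ge1$). Each variable $\lambda_r$ has literals $\lambda_r^+,\lambda_r^-$; each clause is a set of three literals written $\mu_s=\{\mu_{s,1},\mu_{s,2},\mu_{s,3}\}$ in a fixed order. $z\in\{0,1\}^n$ satisfies $\lambda_r^+$ if $z_r=1$ and $\lambda_r^-$ if $z_r=0$; $\psi$ is satisfiable if some $z$ satisfies a literal in every clause. $H_\psi$ is the signed digraph with vertices: all literals $\lambda_r^\pm$, $\ell_0,\dots,\ell_n$, $\mu'_1,\dots,\mu'_m$, $\mu_1,\dots,\mu_m$, $c_1,\dots,c_m$; arcs, for $r\in[n]$, $s\in[m]$: $(\ell_{r-1},\lambda_r^\pm)$, $(\lambda_r^\pm,\ell_r)$, $(c_1,\ell_0)$, $(\mu_{s,1},\mu'_s),(\mu_{s,2},\mu'_s),(\mu_{s,3},\mu_s),(\mu'_s,\mu_s)$ (with $\mu_{s,k}$ the literal vertex), $(\mu_s,c_s)$, $(c_{s+1},c_s)$ with $c_{m+1}=\ell_n$; the arcs $(\mu_s,c_s)$ are negative, all others positive. $F_\psi$ is obtained from $H_\psi$ by: adding a vertex $t$ and a positive arc $(t,i)$ for each literal vertex $i$; making the arc $(c_1,\ell_0)$ negative; deleting each arc $(\mu_s,c_s)$;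 and adding, for each $s\in[m]$, new vertices $q_s,q'_s$ with positive arcs $(\mu_s,q'_s),(\mu_s,q_s),(q'_s,q_s),(q_s,c_s)$. A signed digraph is $(V,E)$ with $E\subseteq V\times V\times\{-1,1\}$. A Boolean network (BN) is $f:\{0,1\}^V\to\{0,1\}^V$; its signed interaction digraph has a positive (negative) arc from $j$ to $i$ iff for some $x$ with $x_j=0$, $f_i(x+e_j)-f_i(x)$ is positive (negative); a BN on $G$ is one whose signed interaction digraph is $G$. $f^i(x)$ is $x$ with $x_i$ replaced by $f_i(x)$; $f^{i_1\cdots i_\ell}=f^{i_\ell}\circ\cdots\circ f^{i_1}$; $f$ is synchronizing if $f^w$ is constant for some word $w$. *)

theory Defs
  imports Main
begin

text \<open>A literal is a pair (r, b): (r, True) is the positive literal of variable r,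
  (r, False) the negative one. A clause is an ordered triple of literals
  (mu_{s,1}, mu_{s,2}, mu_{s,3}); a formula is a list of clauses mu_1 .. mu_m
  over variables 1..n.\<close>

type_synonym lit = "nat \<times> bool"
type_synonym clause = "lit \<times> lit \<times> lit"

definition cl1 :: "clause list \<Rightarrow> nat \<Rightarrow> lit" where
  "cl1 cs s = fst (cs ! (s - 1))"
definition cl2 :: "clause list \<Rightarrow> nat \<Rightarrow> lit" where
  "cl2 cs s = fst (snd (cs ! (s - 1)))"
definition cl3 :: "clause list \<Rightarrow> nat \<Rightarrow> lit" where
  "cl3 cs s = snd (snd (cs ! (s - 1)))"

definition wf_3cnf :: "nat \<Rightarrow> clause list \<Rightarrow> bool" where
  "wf_3cnf n cs \<longleftrightarrow> (\<forall>(a, b, c) \<in> set cs.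
      fst a \<in> {1..n} \<and> fst b \<in> {1..n} \<and> fst c \<in> {1..n} \<and>
      a \<noteq> b \<and> a \<noteq> c \<and> b \<noteq> c)"

definition sat_lit :: "(nat \<Rightarrow> bool) \<Rightarrow> lit \<Rightarrow> bool" where
  "sat_lit z l \<longleftrightarrow> z (fst l) = snd l"

definition satisfiable :: "nat \<Rightarrow> clause list \<Rightarrow> bool" where
  "satisfiable n cs \<longleftrightarrow> (\<exists>z :: nat \<Rightarrow> bool.
      \<forall>s \<in> {1..length cs}. sat_lit z (cl1 cs s) \<or> sat_lit z (cl2 cs s) \<or> sat_lit z (cl3 cs s))"

datatype vtx = Lit nat bool | Lv nat | MuP nat | Mu nat | Cv nat | Tv | Qv nat | QPv nat

definition litv :: "lit \<Rightarrow> vtx" where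
  "litv l = Lit (fst l) (snd l)"

definition H_verts :: "nat \<Rightarrow> clause list \<Rightarrow> vtx set" where
  "H_verts n cs = {Lit r b | r b. r \<in> {1..n}} \<union> Lv ` {0..n} \<union>
     MuP ` {1..length cs} \<union> Mu ` {1..length cs} \<union> Cv ` {1..length cs}"

text \<open>c_{m+1} = l_n\<close>
definition cnext :: "nat \<Rightarrow> clause list \<Rightarrow> nat \<Rightarrow> vtx" where
  "cnext n cs s = (if s = length cs then Lv n else Cv (s + 1))"

definition H_arcs :: "nat \<Rightarrow> clause list \<Rightarrow> (vtx \<times> vtx \<times> int) set" where
  "H_arcs n cs =
     {(Lv (r - 1), Lit r b, 1) | r b. r \<in> {1..n}} \<union>
     {(Lit r b, Lv r, 1) | r b. r \<in> {1..n}} \<union>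
     {(Cv 1, Lv 0, 1)} \<union>
     {(litv (cl1 cs s), MuP s, 1) | s. s \<in> {1..length cs}} \<union>
     {(litv (cl2 cs s), MuP s, 1) | s. s \<in> {1..length cs}} \<union>
     {(litv (cl3 cs s), Mu s, 1) | s. s \<in> {1..length cs}} \<union>
     {(MuP s, Mu s, 1) | s. s \<in> {1..length cs}} \<union>
     {(Mu s, Cv s, -1) | s. s \<in> {1..length cs}} \<union>
     {(cnext n cs s, Cv s, 1) | s. s \<in> {1..length cs}}"

definition F_verts :: "nat \<Rightarrow> clause list \<Rightarrow> vtx set" where
  "F_verts n cs = H_verts n cs \<union> {Tv} \<union> Qv ` {1..length cs} \<union> QPv ` {1..length cs}"

definition F_arcs :: "nat \<Rightarrow> clause list \<Rightarrow> (vtx \<times> vtx \<times> int) set" where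
  "F_arcs n cs =
     ((H_arcs n cs - {(Cv 1, Lv 0, 1)} - {(Mu s, Cv s, -1) | s. s \<in> {1..length cs}})
      \<union> {(Cv 1, Lv 0, -1)}
      \<union> {(Tv, Lit r b, 1) | r b. r \<in> {1..n}}
      \<union> {(Mu s, QPv s, 1) | s. s \<in> {1..length cs}}
      \<union> {(Mu s, Qv s, 1) | s. s \<in> {1..length cs}}
      \<union> {(QPv s, Qv s, 1) | s. s \<in> {1..length cs}}
      \<union> {(Qv s, Cv s, 1) | s. s \<in> {1..length cs}})"

text \<open>Configurations in {0,1}^V are represented by functions that are False outside V.
  A BN on V is a map f sending configurations to configurations (only its values on
  configurations matter).\<close>

definition states :: "'v set \<Rightarrow> ('v \<Rightarrow> bool) set" where
  "states V = {x. \<forall>v. v \<notin> V \<longrightarrow> \<not> x v}"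

definition is_BN :: "'v set \<Rightarrow> (('v \<Rightarrow> bool) \<Rightarrow> ('v \<Rightarrow> bool)) \<Rightarrow> bool" where
  "is_BN V f \<longleftrightarrow> (\<forall>x \<in> states V. f x \<in> states V)"

definition interaction_arcs :: "'v set \<Rightarrow> (('v \<Rightarrow> bool) \<Rightarrow> ('v \<Rightarrow> bool)) \<Rightarrow> ('v \<times> 'v \<times> int) set" where
  "interaction_arcs V f =
     {(j, i, 1) | j i. j \<in> V \<and> i \<in> V \<and>
        (\<exists>x \<in> states V. \<not> x j \<and> \<not> f x i \<and> f (x(j := True)) i)} \<union>
     {(j, i, -1) | j i. j \<in> V \<and> i \<in> V \<and>
        (\<exists>x \<in> states V. \<not> x j \<and> f x i \<and> \<not> f (x(j := True)) i)}"

definition BN_on :: "'v set \<Rightarrow> ('v \<times> 'v \<times> int) set \<Rightarrow> (('v \<Rightarrow> bool) \<Rightarrow> ('v \<Rightarrow> bool)) \<Rightarrow> bool" where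
  "BN_on V E f \<longleftrightarrow> is_BN V f \<and> interaction_arcs V f = E"

definition upd_at :: "(('v \<Rightarrow> bool) \<Rightarrow> ('v \<Rightarrow> bool)) \<Rightarrow> 'v \<Rightarrow> ('v \<Rightarrow> bool) \<Rightarrow> ('v \<Rightarrow> bool)" where
  "upd_at f i x = x(i := f x i)"

definition upd_word :: "(('v \<Rightarrow> bool) \<Rightarrow> ('v \<Rightarrow> bool)) \<Rightarrow> 'v list \<Rightarrow> ('v \<Rightarrow> bool) \<Rightarrow> ('v \<Rightarrow> bool)" where
  "upd_word f w x = foldl (\<lambda>y i. upd_at f i y) x w"

definition synchronizing :: "'v set \<Rightarrow> (('v \<Rightarrow> bool) \<Rightarrow> ('v \<Rightarrow> bool)) \<Rightarrow> bool" where
  "synchronizing V f \<longleftrightarrow>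
     (\<exists>w. set w \<subseteq> V \<and> (\<exists>c. \<forall>x \<in> states V. upd_word f w x = c))"

end

theory Submission
  imports Defs
begin

(*
  Every Boolean network on F_psi is a gate network: t is constant, l_0 negates c_1, q'_s copies
  mu_s, and every other vertex applies AND or OR to its two in-neighbours, because a monotone
  Boolean function of two essential arguments is one of these.

  If z satisfies psi, take t = 1, OR at mu'_s, mu_s and at the literals made true by z, and AND
  everywhere else. As long as t, the true literals and the clause gadgets are 1 (which every update
  preserves), each vertex of the cycle through l_0, the false literals, l_1, ..., l_n, c_m, ..., c_1
  copies its predecessor on the cycle, l_0 with a negation; so two configurations that differ
  exactly on the cycle never merge.

  Conversely, without the arc c_1 -> l_0 the digraph is acyclic, so updating l_0 and then all other
  vertices in topological order sends every configuration to the fixed point fp y with value y at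
  l_0, and fp y is monotone in y. It therefore suffices to make fp True and fp False agree at c_1.
  Call a vertex live if its value in fp y is y. If no q_s were live while c_1 is, making true
  exactly the positive literals that are not live would satisfy psi. For the first live q_s, a
  sweep that skips q'_s (if the successor of c_s is not live) or q_s (if it is) gives one input of
  a gate the value y and the other the value not y, which makes c_s, and hence c_1, independent of y.
*)

section \<open>Boolean networks with few inputs per vertex\<close>

definition gate :: "bool \<Rightarrow> bool \<Rightarrow> bool \<Rightarrow> bool" where
  "gate b u v = (if b then u \<and> v else u \<or> v)"

lemma gate_same [simp]: "gate b u u = u"
  by (simp add: gate_def)

lemma gate_neg_left [simp]: "gate b (\<not> v) v = (\<not> b)"
  by (auto simp: gate_def)

lemma gate_neg_right [simp]: "gate b v (\<not> v) = (\<not> b)"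
  by (auto simp: gate_def)

lemma monotone_essential_is_gate:
  fixes h :: "bool \<Rightarrow> bool \<Rightarrow> bool"
  assumes "\<And>q. h False q \<Longrightarrow> h True q" and "\<And>p. h p False \<Longrightarrow> h p True"
    and "\<exists>q. \<not> h False q \<and> h True q" and "\<exists>p. \<not> h p False \<and> h p True"
  shows "h p q = gate (\<not> h True False) p q"
proof -
  obtain q0 where q0: "\<not> h False q0" "h True q0"
    using assms(3) by blast
  obtain p0 where p0: "\<not> h p0 False" "h p0 True"
    using assms(4) by blast
  show ?thesis
    using assms(1)[of False] assms(1)[of True] assms(2)[of False] assms(2)[of True] q0 p0
    by (cases q0; cases p0; cases p; cases q) (auto simp: gate_def)
qed

lemma fun_upd_in_states: "x \<in> states V \<Longrightarrow> j \<in> V \<Longrightarrow> x(j := c) \<in> states V"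
  by (auto simp: states_def)

lemma interaction_arcs_iff:
  "(j, i, sg) \<in> interaction_arcs V f \<longleftrightarrow> j \<in> V \<and> i \<in> V \<and>
     (sg = 1 \<and> (\<exists>x\<in>states V. \<not> x j \<and> \<not> f x i \<and> f (x(j := True)) i) \<or>
      sg = -1 \<and> (\<exists>x\<in>states V. \<not> x j \<and> f x i \<and> \<not> f (x(j := True)) i))"
  unfolding interaction_arcs_def by auto

lemma BN_on_upd_non_input:
  assumes bn: "BN_on V E f" and x: "x \<in> states V" and j: "j \<in> V"
    and no_arc: "\<And>sg. (j, i, sg) \<notin> E"
  shows "f (x(j := b)) i = f x i"
proof -
  have flip: "f (x(j := True)) i = f (x(j := False)) i"
  proof (rule ccontr)
    assume ne: "f (x(j := True)) i \<noteq> f (x(j := False)) i"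
    let ?z = "x(j := False)"
    have z: "?z \<in> states V" "?z(j := True) = x(j := True)"
      using fun_upd_in_states[OF x j] by auto
    have "f y i \<longrightarrow> i \<in> V" if "y \<in> states V" for y
      using bn that unfolding BN_on_def is_BN_def states_def by blast
    then have "i \<in> V"
      using ne fun_upd_in_states[OF x j] by blast
    moreover have "\<not> ?z j"
      by simp
    ultimately have "(j, i, 1) \<in> interaction_arcs V f \<or> (j, i, -1) \<in> interaction_arcs V f"
    proof (cases "f ?z i")
      case True
      have "(j, i, -1) \<in> interaction_arcs V f"
        unfolding interaction_arcs_iff using ne j z \<open>i \<in> V\<close> True
        by (intro conjI disjI2 bexI[of _ ?z]) simp_all
      then show ?thesis ..
    next
      case False
      have "(j, i, 1) \<in> interaction_arcs V f"
        unfolding interaction_arcs_iff using ne j z \<open>i \<in> V\<close> False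
        by (intro conjI disjI1 bexI[of _ ?z]) simp_all
      then show ?thesis ..
    qed
    then show False
      using bn no_arc unfolding BN_on_def by blast
  qed
  have "f (x(j := b)) i = f (x(j := c)) i" for b c
    using flip by (cases b; cases c) auto
  from this[of b "x j"] show ?thesis
    by simp
qed

lemma BN_on_eq_if_differ_on_non_inputs:
  assumes bn: "BN_on V E f" and D: "finite D"
    and "x \<in> states V" "x' \<in> states V" "{j. x j \<noteq> x' j} \<subseteq> D"
    and "\<And>j sg. j \<in> D \<Longrightarrow> (j, i, sg) \<notin> E"
  shows "f x i = f x' i"
  using D assms(3-)
proof (induction D arbitrary: x' rule: finite_induct)
  case empty
  then show ?case
    by (simp add: fun_eq_iff)
next
  case (insert j D)
  show ?case
  proof (cases "x j = x' j")
    case True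
    then show ?thesis
      using insert by blast
  next
    case False
    then have j: "j \<in> V"
      using insert.prems(1,2) by (auto simp: states_def)
    let ?x'' = "x'(j := x j)"
    have "?x'' \<in> states V"
      using fun_upd_in_states[OF insert.prems(2) j] .
    moreover have "{k. x k \<noteq> ?x'' k} \<subseteq> D"
      using insert.prems(3) by auto
    ultimately have "f x i = f ?x'' i"
      using insert.IH[of ?x''] insert.prems(1,4) by blast
    also have "\<dots> = f x' i"
      using BN_on_upd_non_input[OF bn insert.prems(2) j] insert.prems(4) by blast
    finally show ?thesis .
  qed
qed

lemma BN_on_local:
  assumes bn: "BN_on V E f" and "finite V" and x: "x \<in> states V" and x': "x' \<in> states V"
    and agree: "\<And>j sg. (j, i, sg) \<in> E \<Longrightarrow> j \<in> V \<Longrightarrow> x j = x' j"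
  shows "f x i = f x' i"
proof (rule BN_on_eq_if_differ_on_non_inputs[OF bn _ x x'])
  show "finite {j \<in> V. x j \<noteq> x' j}"
    using \<open>finite V\<close> by simp
  show "{j. x j \<noteq> x' j} \<subseteq> {j \<in> V. x j \<noteq> x' j}"
    using x x' by (auto simp: states_def)
qed (use agree in blast)

lemma interaction_arcs_binary:
  assumes i: "i \<in> V" and u: "u \<in> V" and w: "w \<in> V" and "u \<noteq> w"
    and f: "\<And>x. x \<in> states V \<Longrightarrow> f x i = \<phi> (x u) (x w)"
  shows "(u, i, 1) \<in> interaction_arcs V f \<longleftrightarrow> (\<exists>q. \<not> \<phi> False q \<and> \<phi> True q)"
    and "(u, i, -1) \<in> interaction_arcs V f \<longleftrightarrow> (\<exists>q. \<phi> False q \<and> \<not> \<phi> True q)"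
    and "j \<notin> {u, w} \<Longrightarrow> (j, i, sg) \<notin> interaction_arcs V f"
proof -
  have flip_u: "(\<exists>x\<in>states V. \<not> x u \<and> f x i = p \<and> f (x(u := True)) i = p') \<longleftrightarrow>
      (\<exists>q. \<phi> False q = p \<and> \<phi> True q = p')" for p p'
  proof
    assume "\<exists>x\<in>states V. \<not> x u \<and> f x i = p \<and> f (x(u := True)) i = p'"
    then obtain x where x: "x \<in> states V" "\<not> x u" "f x i = p" "f (x(u := True)) i = p'"
      by blast
    then show "\<exists>q. \<phi> False q = p \<and> \<phi> True q = p'"
      using f[OF x(1)] f[OF fun_upd_in_states[OF x(1) u]] \<open>u \<noteq> w\<close>
      by (intro exI[of _ "x w"]) auto
  next
    assume "\<exists>q. \<phi> False q = p \<and> \<phi> True q = p'"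
    then obtain q where q: "\<phi> False q = p" "\<phi> True q = p'"
      by blast
    define x where "x v \<longleftrightarrow> v = w \<and> q" for v
    have "x \<in> states V" "x(u := True) \<in> states V"
      using u w by (auto simp: x_def states_def)
    then show "\<exists>x\<in>states V. \<not> x u \<and> f x i = p \<and> f (x(u := True)) i = p'"
      using f q \<open>u \<noteq> w\<close> by (intro bexI[of _ x]) (auto simp: x_def)
  qed
  show "(u, i, 1) \<in> interaction_arcs V f \<longleftrightarrow> (\<exists>q. \<not> \<phi> False q \<and> \<phi> True q)"
    using flip_u[of False True] i u by (simp add: interaction_arcs_iff)
  show "(u, i, -1) \<in> interaction_arcs V f \<longleftrightarrow> (\<exists>q. \<phi> False q \<and> \<not> \<phi> True q)"
    using flip_u[of True False] i u by (simp add: interaction_arcs_iff)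
  show "(j, i, sg) \<notin> interaction_arcs V f" if "j \<notin> {u, w}"
  proof -
    have "f (x(j := True)) i = f x i" if "x \<in> states V" "j \<in> V" for x
      using f[OF that(1)] f[OF fun_upd_in_states[OF that]] \<open>j \<notin> {u, w}\<close> by auto
    then show ?thesis
      unfolding interaction_arcs_iff by auto
  qed
qed

lemma interaction_arcs_unary:
  assumes i: "i \<in> V" and u: "u \<in> V" and f: "\<And>x. x \<in> states V \<Longrightarrow> f x i = \<phi> (x u)"
  shows "(u, i, 1) \<in> interaction_arcs V f \<longleftrightarrow> \<not> \<phi> False \<and> \<phi> True"
    and "(u, i, -1) \<in> interaction_arcs V f \<longleftrightarrow> \<phi> False \<and> \<not> \<phi> True"
    and "j \<noteq> u \<Longrightarrow> (j, i, sg) \<notin> interaction_arcs V f"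
proof -
  define pt where "pt p = (\<lambda>v. v = u \<and> p)" for p
  have pt: "pt False \<in> states V" "pt False u = False" "(pt False)(u := True) = pt True" "pt True u"
    using u by (auto simp: pt_def states_def fun_eq_iff)
  have upd: "f x i = \<phi> False" "f (x(u := True)) i = \<phi> True" if "x \<in> states V" "\<not> x u" for x
    using f[OF that(1)] f[OF fun_upd_in_states[OF that(1) u]] that(2) by auto
  show "(u, i, 1) \<in> interaction_arcs V f \<longleftrightarrow> \<not> \<phi> False \<and> \<phi> True"
    unfolding interaction_arcs_iff using i u upd pt f[of "pt False"] by (auto intro!: bexI[of _ "pt False"])
  show "(u, i, -1) \<in> interaction_arcs V f \<longleftrightarrow> \<phi> False \<and> \<not> \<phi> True"
    unfolding interaction_arcs_iff using i u upd pt f[of "pt False"] by (auto intro!: bexI[of _ "pt False"])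
  show "(j, i, sg) \<notin> interaction_arcs V f" if "j \<noteq> u"
  proof -
    have "f (x(j := True)) i = f x i" if "x \<in> states V" "j \<in> V" for x
      using f[OF that(1)] f[OF fun_upd_in_states[OF that]] \<open>j \<noteq> u\<close> by auto
    then show ?thesis
      unfolding interaction_arcs_iff by auto
  qed
qed

lemma BN_on_binary_is_gate:
  assumes bn: "BN_on V E f" and fin: "finite V"
    and i: "i \<in> V" and u: "u \<in> V" and w: "w \<in> V" and "u \<noteq> w"
    and arcs: "\<And>j sg. (j, i, sg) \<in> E \<longleftrightarrow> sg = 1 \<and> (j = u \<or> j = w)"
  shows "\<exists>b. \<forall>x\<in>states V. f x i = gate b (x u) (x w)"
proof -
  define pt where "pt p q = (\<lambda>v. v = u \<and> p \<or> v = w \<and> q)" for p q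
  have pt: "pt p q \<in> states V" "pt p q u = p" "pt p q w = q" for p q
    using u w \<open>u \<noteq> w\<close> by (auto simp: pt_def states_def)
  define h where "h p q = f (pt p q) i" for p q
  have loc: "f x i = h (x u) (x w)" if "x \<in> states V" for x
    unfolding h_def using arcs pt by (intro BN_on_local[OF bn fin that]) auto
  have E: "E = interaction_arcs V f"
    using bn by (simp add: BN_on_def)
  note at_u = interaction_arcs_binary[where f = f and \<phi> = h, OF i u w \<open>u \<noteq> w\<close> loc]
  note at_w = interaction_arcs_binary[where f = f and \<phi> = "\<lambda>q p. h p q", OF i w u \<open>u \<noteq> w\<close>[symmetric] loc]
  have "\<exists>q. \<not> h False q \<and> h True q" "\<not> (\<exists>q. h False q \<and> \<not> h True q)"
    using at_u(1,2) arcs unfolding E by auto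
  moreover have "\<exists>p. \<not> h p False \<and> h p True" "\<not> (\<exists>p. h p False \<and> \<not> h p True)"
    using at_w(1,2) loc arcs unfolding E by auto
  ultimately have "h p q = gate (\<not> h True False) p q" for p q
    by (intro monotone_essential_is_gate) auto
  then show ?thesis
    using loc by blast
qed

lemma BN_on_unary_is_signed_copy:
  assumes bn: "BN_on V E f" and fin: "finite V" and i: "i \<in> V" and u: "u \<in> V"
    and arcs: "\<And>j sg'. (j, i, sg') \<in> E \<longleftrightarrow> sg' = sg \<and> j = u" and sg: "sg = 1 \<or> sg = -1"
  shows "\<forall>x\<in>states V. f x i = (if sg = 1 then x u else \<not> x u)"
proof -
  define pt where "pt p = (\<lambda>v. v = u \<and> p)" for p
  have pt: "pt p \<in> states V" "pt p u = p" for p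
    using u by (auto simp: pt_def states_def)
  define h where "h p = f (pt p) i" for p
  have loc: "f x i = h (x u)" if "x \<in> states V" for x
    unfolding h_def using arcs pt by (intro BN_on_local[OF bn fin that]) auto
  have E: "E = interaction_arcs V f"
    using bn by (simp add: BN_on_def)
  have "h p = (if sg = 1 then p else \<not> p)" for p
    using interaction_arcs_unary(1,2)[where f = f and \<phi> = h, OF i u loc] arcs sg unfolding E
    by (cases p) auto
  then show ?thesis
    using loc by simp
qed

lemma BN_on_no_inputs_is_const:
  assumes bn: "BN_on V E f" and fin: "finite V" and arcs: "\<And>j sg. (j, i, sg) \<notin> E"
  shows "\<forall>x\<in>states V. f x i = f (\<lambda>_. False) i"
proof
  fix x assume "x \<in> states V"
  then show "f x i = f (\<lambda>_. False) i"
    by (rule BN_on_local[OF bn fin]) (auto simp: states_def arcs)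
qed

lemma interaction_arcs_gate:
  assumes i: "i \<in> V" and u: "u \<in> V" and w: "w \<in> V" and "u \<noteq> w"
    and f: "\<And>x. x \<in> states V \<Longrightarrow> f x i = gate b (x u) (x w)"
  shows "(j, i, sg) \<in> interaction_arcs V f \<longleftrightarrow> j \<in> V \<and> sg = 1 \<and> (j = u \<or> j = w)"
proof -
  have f': "f x i = (\<lambda>q p. gate b p q) (x w) (x u)" if "x \<in> states V" for x
    using f[OF that] by simp
  note at_u = interaction_arcs_binary[where f = f, OF i u w \<open>u \<noteq> w\<close> f]
  note at_w = interaction_arcs_binary[where f = f, OF i w u \<open>u \<noteq> w\<close>[symmetric] f']
  have "(u, i, 1) \<in> interaction_arcs V f" "(w, i, 1) \<in> interaction_arcs V f"
    using at_u(1) at_w(1) by (auto simp: gate_def)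
  moreover have "(u, i, -1) \<notin> interaction_arcs V f" "(w, i, -1) \<notin> interaction_arcs V f"
    using at_u(2) at_w(2) by (auto simp: gate_def)
  moreover have "j \<in> V \<and> (sg = 1 \<or> sg = -1)" if "(j, i, sg) \<in> interaction_arcs V f"
    using that unfolding interaction_arcs_iff by auto
  ultimately show ?thesis
    using at_u(3) u w by (cases "j = u \<or> j = w") auto
qed

lemma interaction_arcs_signed_copy:
  assumes i: "i \<in> V" and u: "u \<in> V" and sg: "sg = 1 \<or> sg = -1"
    and f: "\<And>x. x \<in> states V \<Longrightarrow> f x i = (if sg = 1 then x u else \<not> x u)"
  shows "(j, i, sg') \<in> interaction_arcs V f \<longleftrightarrow> j \<in> V \<and> sg' = sg \<and> j = u"
proof -
  note at_u = interaction_arcs_unary[where f = f, OF i u f]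
  have "(u, i, sg) \<in> interaction_arcs V f" "(u, i, - sg) \<notin> interaction_arcs V f"
    using sg at_u(1,2) by (elim disjE; simp)+
  moreover have "j \<in> V \<and> (sg' = 1 \<or> sg' = -1)" if "(j, i, sg') \<in> interaction_arcs V f"
    using that unfolding interaction_arcs_iff by auto
  ultimately show ?thesis
    using at_u(3) u sg by (cases "j = u") auto
qed

lemma interaction_arcs_const:
  assumes "\<And>x. x \<in> states V \<Longrightarrow> f x i = c"
  shows "(j, i, sg) \<notin> interaction_arcs V f"
  using assms fun_upd_in_states unfolding interaction_arcs_iff by fastforce

lemma upd_word_Nil [simp]: "upd_word f [] x = x"
  by (simp add: upd_word_def)

lemma upd_word_Cons [simp]: "upd_word f (i # w) x = upd_word f w (upd_at f i x)"
  by (simp add: upd_word_def)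

lemma upd_word_append: "upd_word f (u @ w) x = upd_word f w (upd_word f u x)"
  by (simp add: upd_word_def)

lemma upd_word_states:
  assumes "is_BN V f" and "x \<in> states V"
  shows "upd_word f w x \<in> states V"
  using assms(2)
proof (induction w arbitrary: x)
  case (Cons i w)
  have "upd_at f i x \<in> states V"
    using assms(1) Cons.prems by (auto simp: upd_at_def states_def is_BN_def)
  then show ?case
    using Cons.IH by simp
qed simp

lemma upd_word_cong:
  assumes "\<forall>x\<in>states V. f x = g x" and "is_BN V g" and "x \<in> states V"
  shows "upd_word f w x = upd_word g w x"
  using assms(3)
proof (induction w arbitrary: x)
  case (Cons i w)
  have "upd_at f i x = upd_at g i x"
    using assms(1) Cons.prems by (simp add: upd_at_def)
  moreover have "upd_at g i x \<in> states V"
    using upd_word_states[OF assms(2) Cons.prems, of "[i]"] by simp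
  ultimately show ?case
    using Cons.IH by simp
qed simp

lemma synchronizing_cong:
  assumes "\<forall>x\<in>states V. f x = g x" and "is_BN V g"
  shows "synchronizing V f \<longleftrightarrow> synchronizing V g"
  unfolding synchronizing_def using upd_word_cong[OF assms] by auto

section \<open>The digraph F_psi\<close>

lemma in_F_verts [simp]:
  "Lit r b \<in> F_verts n cs \<longleftrightarrow> r \<in> {1..n}"
  "Lv r \<in> F_verts n cs \<longleftrightarrow> r \<le> n"
  "MuP s \<in> F_verts n cs \<longleftrightarrow> s \<in> {1..length cs}"
  "Mu s \<in> F_verts n cs \<longleftrightarrow> s \<in> {1..length cs}"
  "Cv s \<in> F_verts n cs \<longleftrightarrow> s \<in> {1..length cs}"
  "Qv s \<in> F_verts n cs \<longleftrightarrow> s \<in> {1..length cs}"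
  "QPv s \<in> F_verts n cs \<longleftrightarrow> s \<in> {1..length cs}"
  "Tv \<in> F_verts n cs"
  by (auto simp: F_verts_def H_verts_def)

lemma finite_F_verts: "finite (F_verts n cs)"
proof -
  have "F_verts n cs \<subseteq> case_prod Lit ` ({1..n} \<times> UNIV) \<union> Lv ` {0..n} \<union> {Tv} \<union>
      (\<Union>s\<in>{1..length cs}. {MuP s, Mu s, Cv s, Qv s, QPv s})"
    by (auto simp: F_verts_def H_verts_def)
  then show ?thesis
    by (rule finite_subset) simp
qed

lemma litv_eq_iff [simp]: "litv l = litv l' \<longleftrightarrow> l = l'"
  by (cases l; cases l') (simp add: litv_def)

lemma litv_in_F_verts [simp]: "litv l \<in> F_verts n cs \<longleftrightarrow> fst l \<in> {1..n}"
  by (simp add: litv_def)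

lemma litv_neq [simp]:
  "litv l \<noteq> Tv" "litv l \<noteq> Lv r" "litv l \<noteq> MuP s" "litv l \<noteq> Mu s"
  "litv l \<noteq> Cv s" "litv l \<noteq> Qv s" "litv l \<noteq> QPv s"
  by (simp_all add: litv_def)

lemma wf_3cnf_clause:
  assumes "wf_3cnf n cs" and "s \<in> {1..length cs}"
  shows "fst (cl1 cs s) \<in> {1..n}" "fst (cl2 cs s) \<in> {1..n}" "fst (cl3 cs s) \<in> {1..n}"
    "cl1 cs s \<noteq> cl2 cs s"
proof -
  have "cs ! (s - 1) \<in> set cs"
    using assms(2) by auto
  then obtain a b c where "cs ! (s - 1) = (a, b, c)" "(a, b, c) \<in> set cs"
    by (metis prod_cases3)
  then show "fst (cl1 cs s) \<in> {1..n}" "fst (cl2 cs s) \<in> {1..n}" "fst (cl3 cs s) \<in> {1..n}"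
    "cl1 cs s \<noteq> cl2 cs s"
    using assms(1) unfolding wf_3cnf_def cl1_def cl2_def cl3_def by auto
qed

locale cnf3 =
  fixes n :: nat and cs :: "clause list"
  assumes wf: "wf_3cnf n cs" and clauses_ne: "1 \<le> length cs" and vars_ne: "1 \<le> n"
begin

abbreviation V :: "vtx set" where "V \<equiv> F_verts n cs"

abbreviation m :: nat where "m \<equiv> length cs"

definition in1 :: "vtx \<Rightarrow> vtx" where
  "in1 v = (case v of
      Lit r b \<Rightarrow> Lv (r - 1)
    | Lv r \<Rightarrow> (if r = 0 then Cv 1 else Lit r True)
    | MuP s \<Rightarrow> litv (cl1 cs s)
    | Mu s \<Rightarrow> litv (cl3 cs s)
    | QPv s \<Rightarrow> Mu s
    | Qv s \<Rightarrow> Mu s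
    | Cv s \<Rightarrow> Qv s
    | Tv \<Rightarrow> Tv)"

definition in2 :: "vtx \<Rightarrow> vtx" where
  "in2 v = (case v of
      Lit r b \<Rightarrow> Tv
    | Lv r \<Rightarrow> Lit r False
    | MuP s \<Rightarrow> litv (cl2 cs s)
    | Mu s \<Rightarrow> MuP s
    | Qv s \<Rightarrow> QPv s
    | Cv s \<Rightarrow> cnext n cs s
    | _ \<Rightarrow> Tv)"

definition unary :: "vtx \<Rightarrow> bool" where
  "unary v \<longleftrightarrow> v = Lv 0 \<or> (\<exists>s. v = QPv s)"

definition inputs :: "vtx \<Rightarrow> vtx set" where
  "inputs v = (if v = Tv then {} else if unary v then {in1 v} else {in1 v, in2 v})"

lemma inputs_simps:
  "inputs Tv = {}" "inputs (Lv r) = (if r = 0 then {Cv 1} else {Lit r True, Lit r False})"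
  "inputs (Lit r b) = {Lv (r - 1), Tv}" "inputs (MuP s) = {litv (cl1 cs s), litv (cl2 cs s)}"
  "inputs (Mu s) = {litv (cl3 cs s), MuP s}" "inputs (QPv s) = {Mu s}" "inputs (Qv s) = {Mu s, QPv s}"
  "inputs (Cv s) = {Qv s, cnext n cs s}"
  by (simp_all add: inputs_def in1_def in2_def unary_def)

lemma F_arcs_iff:
  "(j, i, sg) \<in> F_arcs n cs \<longleftrightarrow> i \<in> V \<and> j \<in> inputs i \<and> sg = (if i = Lv 0 then -1 else 1)"
proof (cases i)
  case (Lit r b)
  then show ?thesis
    by (cases b) (auto simp: F_arcs_def H_arcs_def inputs_def in1_def in2_def unary_def)
next
  case (Lv r)
  then show ?thesis
    by (auto simp: F_arcs_def H_arcs_def inputs_def in1_def in2_def unary_def cnext_def)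
next
  case (Cv s)
  then show ?thesis
    by (auto simp: F_arcs_def H_arcs_def inputs_def in1_def in2_def unary_def)
qed (auto simp: F_arcs_def H_arcs_def inputs_def in1_def in2_def unary_def cnext_def)

lemma inputs_in_V: "v \<in> V \<Longrightarrow> inputs v \<subseteq> V"
  using wf_3cnf_clause[OF wf] clauses_ne
  by (cases v) (auto simp: inputs_def in1_def in2_def unary_def cnext_def)

lemma in1_neq_in2: "v \<in> V \<Longrightarrow> v \<noteq> Tv \<Longrightarrow> \<not> unary v \<Longrightarrow> in1 v \<noteq> in2 v"
  using wf_3cnf_clause(4)[OF wf]
  by (cases v) (auto simp: in1_def in2_def unary_def cnext_def)

definition rank :: "vtx \<Rightarrow> nat" where
  "rank v = (case v of
      Tv \<Rightarrow> 0
    | Lit r b \<Rightarrow> (if b then 3 * r - 1 else 3 * r)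
    | Lv r \<Rightarrow> 3 * r + 1
    | MuP s \<Rightarrow> 3 * n + 2
    | Mu s \<Rightarrow> 3 * n + 3
    | QPv s \<Rightarrow> 3 * n + 4
    | Qv s \<Rightarrow> 3 * n + 5
    | Cv s \<Rightarrow> 3 * n + 6 + (m - s))"

lemma rank_simps [simp]:
  "rank Tv = 0" "rank (Lit r True) = 3 * r - 1" "rank (Lit r False) = 3 * r"
  "rank (Lv r) = 3 * r + 1" "rank (MuP s) = 3 * n + 2" "rank (Mu s) = 3 * n + 3"
  "rank (QPv s) = 3 * n + 4" "rank (Qv s) = 3 * n + 5" "rank (Cv s) = 3 * n + 6 + (m - s)"
  by (simp_all add: rank_def)

lemma rank_litv: "fst l \<in> {1..n} \<Longrightarrow> rank (litv l) \<le> 3 * n"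
  by (cases l) (auto simp: rank_def litv_def)

lemma rank_inputs:
  assumes "v \<in> V" "v \<noteq> Lv 0" "u \<in> inputs v"
  shows "rank u < rank v"
proof (cases v)
  case (Lit r b)
  then show ?thesis
    using assms by (cases b) (auto simp: inputs_simps)
next
  case (Lv r)
  then show ?thesis
    using assms by (auto simp: inputs_simps)
next
  case (MuP s)
  then have "u = litv (cl1 cs s) \<or> u = litv (cl2 cs s)"
    using assms by (simp add: inputs_simps)
  then show ?thesis
    using MuP assms rank_litv wf_3cnf_clause[OF wf, of s] by fastforce
next
  case (Mu s)
  then have "u = litv (cl3 cs s) \<or> u = MuP s"
    using assms by (simp add: inputs_simps)
  then show ?thesis
    using Mu assms rank_litv wf_3cnf_clause[OF wf, of s] by fastforce
next
  case (Cv s)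
  then show ?thesis
    using assms by (auto simp: inputs_simps cnext_def)
qed (use assms in \<open>auto simp: inputs_simps\<close>)

definition topo_word :: "vtx set \<Rightarrow> vtx list" where
  "topo_word U = sort_key rank (SOME xs. set xs = U \<and> distinct xs)"

lemma topo_word:
  assumes "finite U"
  shows "set (topo_word U) = U" "distinct (topo_word U)" "sorted (map rank (topo_word U))"
proof -
  have "set (SOME xs. set xs = U \<and> distinct xs) = U \<and> distinct (SOME xs. set xs = U \<and> distinct xs)"
    using finite_distinct_list[OF assms] by (rule someI_ex)
  then show "set (topo_word U) = U" "distinct (topo_word U)" "sorted (map rank (topo_word U))"
    by (simp_all add: topo_word_def)
qed

lemma inputs_QPv: "QPv s \<in> inputs v \<Longrightarrow> v = Qv s"
  by (cases v) (auto simp: inputs_simps cnext_def litv_def split: if_splits)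

lemma inputs_Qv: "Qv s \<in> inputs v \<Longrightarrow> v = Cv s"
  by (cases v) (auto simp: inputs_simps cnext_def litv_def split: if_splits)

lemma inputs_Cv: "Cv s \<in> inputs v \<Longrightarrow> v = Lv 0 \<and> s = 1 \<or> v = Cv (s - 1) \<and> 1 \<le> s"
  by (cases v) (auto simp: inputs_simps cnext_def litv_def split: if_splits)

lemma cnext_in_V: "s \<in> {1..m} \<Longrightarrow> cnext n cs s \<in> V - {Lv 0}"
  using vars_ne by (auto simp: cnext_def)

lemma inputs_closed_without_chain_prefix:
  assumes s0: "s0 \<in> {1..m}" and E: "E \<subseteq> {QPv s0}"
  defines "W \<equiv> V - {Lv 0} - (E \<union> {Qv s0} \<union> Cv ` {1..s0})"
  shows "\<forall>v\<in>W. inputs v \<subseteq> W \<union> {Lv 0}"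
proof (intro ballI subsetI)
  fix v u assume v: "v \<in> W" and u: "u \<in> inputs v"
  have "u \<in> V"
    using inputs_in_V v u by (auto simp: W_def)
  moreover have "u \<notin> E" "u \<noteq> Qv s0"
    using v u E inputs_QPv[of s0 v] inputs_Qv[of s0 v] s0 by (auto simp: W_def)
  moreover have "u \<notin> Cv ` {1..s0}"
    using v u inputs_Cv by (fastforce simp: W_def)
  ultimately show "u \<in> W \<union> {Lv 0}"
    by (auto simp: W_def)
qed

end

section \<open>Boolean networks on F_psi are gate networks\<close>

locale gate_net = cnf3 +
  fixes t_val :: bool and op :: "vtx \<Rightarrow> bool"
begin

definition gate_fun :: "(vtx \<Rightarrow> bool) \<Rightarrow> vtx \<Rightarrow> bool" where
  "gate_fun X v =
    (if v = Tv then t_val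
     else if v = Lv 0 then \<not> X (Cv 1)
     else if unary v then X (in1 v)
     else gate (op v) (X (in1 v)) (X (in2 v)))"

definition net :: "(vtx \<Rightarrow> bool) \<Rightarrow> vtx \<Rightarrow> bool" where
  "net X v \<longleftrightarrow> v \<in> V \<and> gate_fun X v"

lemma gate_fun_simps [simp]:
  "gate_fun X Tv = t_val"
  "gate_fun X (Lv 0) = (\<not> X (Cv 1))"
  "r \<noteq> 0 \<Longrightarrow> gate_fun X (Lv r) = gate (op (Lv r)) (X (Lit r True)) (X (Lit r False))"
  "gate_fun X (Lit r b) = gate (op (Lit r b)) (X (Lv (r - 1))) (X Tv)"
  "gate_fun X (MuP s) = gate (op (MuP s)) (X (litv (cl1 cs s))) (X (litv (cl2 cs s)))"
  "gate_fun X (Mu s) = gate (op (Mu s)) (X (litv (cl3 cs s))) (X (MuP s))"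
  "gate_fun X (QPv s) = X (Mu s)"
  "gate_fun X (Qv s) = gate (op (Qv s)) (X (Mu s)) (X (QPv s))"
  "gate_fun X (Cv s) = gate (op (Cv s)) (X (Qv s)) (X (cnext n cs s))"
  by (simp_all add: gate_fun_def unary_def in1_def in2_def)

lemma net_in_V [simp]: "v \<in> V \<Longrightarrow> net X v = gate_fun X v"
  by (simp add: net_def)

lemma is_BN_net: "is_BN V net"
  by (simp add: is_BN_def net_def states_def)

lemma BN_on_net: "BN_on V (F_arcs n cs) net"
proof -
  have "(j, i, sg) \<in> interaction_arcs V net \<longleftrightarrow> (j, i, sg) \<in> F_arcs n cs" for j i sg
  proof (cases "i \<in> V")
    case False
    then show ?thesis
      unfolding interaction_arcs_iff F_arcs_iff by blast
  next
    case i: True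
    have inputs: "inputs i \<subseteq> V"
      using inputs_in_V[OF i] .
    consider "i = Tv" | "i \<noteq> Tv" "unary i" | "i \<noteq> Tv" "\<not> unary i"
      by blast
    then show ?thesis
    proof cases
      case 1
      then have "(j, i, sg) \<notin> interaction_arcs V net"
        by (intro interaction_arcs_const[of _ _ _ t_val]) (simp add: gate_fun_def)
      then show ?thesis
        using 1 by (simp add: F_arcs_iff inputs_def)
    next
      case 2
      let ?sg = "if i = Lv 0 then -1 else 1 :: int"
      have "net x i = (if ?sg = 1 then x (in1 i) else \<not> x (in1 i))" for x
        using 2 i by (auto simp: gate_fun_def in1_def)
      then have "(j, i, sg) \<in> interaction_arcs V net \<longleftrightarrow> j \<in> V \<and> sg = ?sg \<and> j = in1 i"
        using 2 inputs i by (intro interaction_arcs_signed_copy) (auto simp: inputs_def)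
      then show ?thesis
        using 2 inputs i by (auto simp: F_arcs_iff inputs_def)
    next
      case 3
      have "net x i = gate (op i) (x (in1 i)) (x (in2 i))" for x
        using 3 i by (auto simp: gate_fun_def unary_def)
      then have "(j, i, sg) \<in> interaction_arcs V net \<longleftrightarrow> j \<in> V \<and> sg = 1 \<and> (j = in1 i \<or> j = in2 i)"
        using 3 inputs i in1_neq_in2 by (intro interaction_arcs_gate) (auto simp: inputs_def)
      then show ?thesis
        using 3 inputs i by (auto simp: F_arcs_iff inputs_def unary_def)
    qed
  qed
  then show ?thesis
    unfolding BN_on_def using is_BN_net by auto
qed

end

context cnf3
begin

lemma BN_on_F_local_forms:
  assumes bn: "BN_on V (F_arcs n cs) f"
  shows "\<forall>x\<in>states V. f x Tv = f (\<lambda>_. False) Tv"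
    and "i \<in> V \<Longrightarrow> unary i \<Longrightarrow> \<forall>x\<in>states V. f x i = (if i = Lv 0 then \<not> x (in1 i) else x (in1 i))"
    and "i \<in> V \<Longrightarrow> i \<noteq> Tv \<Longrightarrow> \<not> unary i \<Longrightarrow> \<exists>b. \<forall>x\<in>states V. f x i = gate b (x (in1 i)) (x (in2 i))"
proof -
  note fin = finite_F_verts[of n cs]
  show "\<forall>x\<in>states V. f x Tv = f (\<lambda>_. False) Tv"
    by (rule BN_on_no_inputs_is_const[OF bn fin]) (simp add: F_arcs_iff inputs_def)
  show "\<forall>x\<in>states V. f x i = (if i = Lv 0 then \<not> x (in1 i) else x (in1 i))"
    if i: "i \<in> V" "unary i"
  proof -
    let ?sg = "if i = Lv 0 then -1 else 1 :: int"
    have "i \<noteq> Tv"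
      using i(2) by (auto simp: unary_def)
    then have "\<forall>x\<in>states V. f x i = (if ?sg = 1 then x (in1 i) else \<not> x (in1 i))"
      using i inputs_in_V[OF i(1)]
      by (intro BN_on_unary_is_signed_copy[OF bn fin]) (auto simp: F_arcs_iff inputs_def)
    then show ?thesis
      by auto
  qed
  show "\<exists>b. \<forall>x\<in>states V. f x i = gate b (x (in1 i)) (x (in2 i))"
    if "i \<in> V" "i \<noteq> Tv" "\<not> unary i"
    using that inputs_in_V[of i] in1_neq_in2[of i]
    by (intro BN_on_binary_is_gate[OF bn fin]) (auto simp: F_arcs_iff inputs_def unary_def)
qed

lemma BN_on_F_is_gate_net:
  assumes bn: "BN_on V (F_arcs n cs) f"
  shows "\<exists>t op. \<forall>x\<in>states V. f x = gate_net.net n cs t op x"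
proof -
  note forms = BN_on_F_local_forms[OF bn]
  have binary: "\<forall>i\<in>{i \<in> V. i \<noteq> Tv \<and> \<not> unary i}. \<exists>b. \<forall>x\<in>states V. f x i = gate b (x (in1 i)) (x (in2 i))"
    using forms(3) by blast
  obtain op where f_binary:
    "\<And>i. i \<in> V \<Longrightarrow> i \<noteq> Tv \<Longrightarrow> \<not> unary i \<Longrightarrow> \<forall>x\<in>states V. f x i = gate (op i) (x (in1 i)) (x (in2 i))"
    using bchoice[OF binary] by auto
  interpret N: gate_net n cs "f (\<lambda>_. False) Tv" op
    by unfold_locales
  have "f x v = N.net x v" if x: "x \<in> states V" for x v
  proof (cases "v \<in> V")
    case False
    then show ?thesis
      using bn x by (auto simp: BN_on_def is_BN_def states_def N.net_def)
  next
    case v: True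
    consider "v = Tv" | "v \<noteq> Tv" "unary v" | "v \<noteq> Tv" "\<not> unary v"
      by blast
    then show ?thesis
    proof cases
      case 1
      then show ?thesis
        using forms(1) x by (simp add: N.gate_fun_def)
    next
      case 2
      then show ?thesis
        using forms(2)[OF v 2(2)] x v 2(1) by (simp add: N.gate_fun_def in1_def)
    next
      case 3
      then show ?thesis
        using f_binary[OF v 3] x v by (simp add: N.gate_fun_def unary_def)
    qed
  qed
  then show ?thesis
    by blast
qed

end

section \<open>A satisfying assignment yields a network that does not synchronize\<close>

definition witness_op :: "(nat \<Rightarrow> bool) \<Rightarrow> vtx \<Rightarrow> bool" where
  "witness_op z v = (case v of Lit r b \<Rightarrow> z r \<noteq> b | MuP s \<Rightarrow> False | Mu s \<Rightarrow> False | _ \<Rightarrow> True)"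

locale sat_witness = gate_net n cs True "witness_op z" for n cs and z :: "nat \<Rightarrow> bool" +
  assumes z_sat: "\<forall>s\<in>{1..length cs}. sat_lit z (cl1 cs s) \<or> sat_lit z (cl2 cs s) \<or> sat_lit z (cl3 cs s)"
begin

definition cycle :: "vtx set" where
  "cycle = Lv ` {0..n} \<union> {Lit r (\<not> z r) | r. r \<in> {1..n}} \<union> Cv ` {1..m}"

definition forced :: "vtx set" where
  "forced = {Tv} \<union> {Lit r (z r) | r. r \<in> {1..n}} \<union> (\<Union>s\<in>{1..m}. {Mu s, QPv s, Qv s}) \<union>
     {MuP s | s. s \<in> {1..m} \<and> (sat_lit z (cl1 cs s) \<or> sat_lit z (cl2 cs s))}"

definition forced_true :: "(vtx \<Rightarrow> bool) \<Rightarrow> bool" where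
  "forced_true x \<longleftrightarrow> x \<in> states V \<and> (\<forall>v\<in>forced. x v)"

lemma litv_sat: "sat_lit z l \<Longrightarrow> fst l \<in> {1..n} \<Longrightarrow> litv l \<in> forced"
  by (cases l) (auto simp: sat_lit_def litv_def forced_def)

lemma gate_fun_forced:
  assumes x: "forced_true x" and v: "v \<in> forced"
  shows "gate_fun x v"
proof -
  have x_forced: "\<And>u. u \<in> forced \<Longrightarrow> x u"
    using x by (simp add: forced_true_def)
  have x_sat: "x (litv l)" if "sat_lit z l" "fst l \<in> {1..n}" for l
    using x_forced litv_sat[OF that] .
  from v consider "v = Tv" | r where "v = Lit r (z r)" "r \<in> {1..n}"
    | s where "s \<in> {1..m}" "v = Mu s \<or> v = QPv s \<or> v = Qv s"
    | s where "s \<in> {1..m}" "v = MuP s" "sat_lit z (cl1 cs s) \<or> sat_lit z (cl2 cs s)"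
    unfolding forced_def by blast
  then show ?thesis
  proof cases
    case 1
    then show ?thesis
      by simp
  next
    case 2
    then show ?thesis
      using x_forced[of Tv] by (simp add: gate_def forced_def witness_op_def)
  next
    case (3 s)
    have "sat_lit z (cl1 cs s) \<or> sat_lit z (cl2 cs s) \<or> sat_lit z (cl3 cs s)"
      using z_sat 3(1) by blast
    then have "x (MuP s) \<or> x (litv (cl3 cs s))"
      using 3(1) x_forced x_sat[of "cl3 cs s"] wf_3cnf_clause(3)[OF wf 3(1)]
      unfolding forced_def by blast
    then show ?thesis
      using 3 x_forced by (auto simp: gate_def witness_op_def forced_def)
  next
    case (4 s)
    then show ?thesis
      using x_sat[of "cl1 cs s"] x_sat[of "cl2 cs s"] wf_3cnf_clause[OF wf 4(1)]
      by (auto simp: gate_def witness_op_def)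
  qed
qed

lemma forced_true_upd_at:
  assumes "forced_true x"
  shows "forced_true (upd_at net i x)"
  using assms gate_fun_forced is_BN_net forced_def
  by (auto simp: forced_true_def upd_at_def states_def net_def)

lemma gate_fun_cycle_flip:
  assumes x: "forced_true x" and x': "forced_true x'" and flip: "\<forall>u\<in>cycle. x' u = (\<not> x u)"
    and v: "v \<in> cycle"
  shows "gate_fun x' v = (\<not> gate_fun x v)"
proof -
  have forced: "y Tv \<and> (\<forall>r\<in>{1..n}. y (Lit r (z r))) \<and> (\<forall>s\<in>{1..m}. y (Qv s))"
    if "forced_true y" for y
    using that by (auto simp: forced_true_def forced_def)
  have "Cv 1 \<in> cycle" "r \<in> {1..n} \<Longrightarrow> Lit r (\<not> z r) \<in> cycle \<and> Lv (r - 1) \<in> cycle"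
    "s \<in> {1..m} \<Longrightarrow> cnext n cs s \<in> cycle" for r s
    using clauses_ne by (auto simp: cycle_def cnext_def)
  then have flip': "x' (Cv 1) = (\<not> x (Cv 1))"
    "r \<in> {1..n} \<Longrightarrow> x' (Lit r (\<not> z r)) = (\<not> x (Lit r (\<not> z r)))"
    "r \<in> {1..n} \<Longrightarrow> x' (Lv (r - 1)) = (\<not> x (Lv (r - 1)))"
    "s \<in> {1..m} \<Longrightarrow> x' (cnext n cs s) = (\<not> x (cnext n cs s))" for r s
    using flip by blast+
  from v consider "v = Lv 0" | r where "v = Lv r" "r \<in> {1..n}"
    | r where "v = Lit r (\<not> z r)" "r \<in> {1..n}" | s where "v = Cv s" "s \<in> {1..m}"
    unfolding cycle_def by force
  then show ?thesis
  proof cases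
    case 1
    then show ?thesis
      using flip' by simp
  next
    case (2 r)
    have "x (Lit r (z r))" "x' (Lit r (z r))"
      using forced[OF x] forced[OF x'] 2(2) by blast+
    then show ?thesis
      using 2 flip'(2)[of r]
      by (cases "z r") (auto simp: gate_def witness_op_def)
  next
    case (3 r)
    then show ?thesis
      using forced[OF x] forced[OF x'] flip'(3)[of r]
      by (auto simp: gate_def witness_op_def)
  next
    case (4 s)
    then show ?thesis
      using forced[OF x] forced[OF x'] flip'(4)[of s]
      by (auto simp: gate_def witness_op_def)
  qed
qed

definition cycle_flipped :: "(vtx \<Rightarrow> bool) \<Rightarrow> (vtx \<Rightarrow> bool) \<Rightarrow> bool" where
  "cycle_flipped x x' \<longleftrightarrow> forced_true x \<and> forced_true x' \<and> (\<forall>u\<in>cycle. x' u = (\<not> x u))"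

lemma cycle_V: "cycle \<subseteq> V"
  using clauses_ne by (auto simp: cycle_def)

lemma cycle_flipped_upd_at:
  assumes "cycle_flipped x x'"
  shows "cycle_flipped (upd_at net i x) (upd_at net i x')"
proof -
  have "forced_true (upd_at net i x)" "forced_true (upd_at net i x')"
    using assms forced_true_upd_at unfolding cycle_flipped_def by blast+
  moreover have "upd_at net i x' u = (\<not> upd_at net i x u)" if "u \<in> cycle" for u
    using assms that cycle_V gate_fun_cycle_flip[of x x' u] unfolding cycle_flipped_def
    by (cases "u = i") (auto simp: upd_at_def)
  ultimately show ?thesis
    unfolding cycle_flipped_def by blast
qed

lemma cycle_flipped_upd_word: "cycle_flipped x x' \<Longrightarrow> cycle_flipped (upd_word net w x) (upd_word net w x')"
  by (induction w arbitrary: x x') (simp_all add: cycle_flipped_upd_at)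

lemma not_synchronizing: "\<not> synchronizing V net"
proof
  assume "synchronizing V net"
  then obtain w c where c: "\<forall>x\<in>states V. upd_word net w x = c"
    unfolding synchronizing_def by blast
  define x0 where "x0 v \<longleftrightarrow> v \<in> V" for v
  define x1 where "x1 v \<longleftrightarrow> v \<in> V \<and> v \<notin> cycle" for v
  have "forced \<subseteq> V"
    by (auto simp: forced_def)
  moreover have "forced \<inter> cycle = {}"
    by (auto simp: forced_def cycle_def)
  ultimately have "cycle_flipped x0 x1"
    using cycle_V unfolding cycle_flipped_def forced_true_def x0_def x1_def states_def by blast
  moreover have "x0 \<in> states V" "x1 \<in> states V"
    by (simp_all add: x0_def x1_def states_def)
  ultimately have "cycle_flipped c c"
    using cycle_flipped_upd_word[of x0 x1 w] c by simp
  moreover have "Lv 0 \<in> cycle"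
    by (simp add: cycle_def)
  ultimately show False
    unfolding cycle_flipped_def by blast
qed

end

section \<open>Without a satisfying assignment every network synchronizes\<close>

context gate_net
begin

lemma gate_fun_cong: "(\<And>u. u \<in> inputs v \<Longrightarrow> X u = X' u) \<Longrightarrow> gate_fun X v = gate_fun X' v"
  by (auto simp: gate_fun_def inputs_def in1_def)

lemma gate_fun_mono:
  "v \<noteq> Lv 0 \<Longrightarrow> (\<And>u. u \<in> inputs v \<Longrightarrow> X u \<Longrightarrow> X' u) \<Longrightarrow> gate_fun X v \<Longrightarrow> gate_fun X' v"
  by (auto simp: gate_fun_def inputs_def gate_def split: if_splits)

lemma upd_word_topo:
  assumes "distinct w" "sorted (map rank w)" "set w \<subseteq> V - {Lv 0}"
  shows "\<forall>v. (v \<notin> set w \<longrightarrow> upd_word net w X v = X v) \<and>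
    (v \<in> set w \<longrightarrow> upd_word net w X v = gate_fun (upd_word net w X) v)"
  using assms
proof (induction w arbitrary: X)
  case (Cons i w)
  have i: "i \<in> V" "i \<noteq> Lv 0" "i \<notin> set w" and later: "\<forall>u\<in>set w. rank i \<le> rank u"
    using Cons.prems by auto
  define X1 where "X1 = X(i := gate_fun X i)"
  define Y where "Y = upd_word net w X1"
  have Y: "upd_word net (i # w) X = Y"
    using i by (simp add: Y_def X1_def upd_at_def)
  have IH: "\<forall>v. (v \<notin> set w \<longrightarrow> Y v = X1 v) \<and> (v \<in> set w \<longrightarrow> Y v = gate_fun Y v)"
    unfolding Y_def using Cons by simp
  have "gate_fun Y i = gate_fun X i"
  proof (rule gate_fun_cong)
    fix u assume "u \<in> inputs i"
    then have "rank u < rank i"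
      using rank_inputs i by blast
    then have "u \<notin> set w" "u \<noteq> i"
      using later by auto
    then show "Y u = X u"
      using IH by (simp add: X1_def)
  qed
  then show ?case
    using IH i unfolding Y by (auto simp: X1_def)
qed simp

lemma fixed_points_agree:
  assumes U: "U \<subseteq> V - {Lv 0}"
    and Y: "\<forall>v\<in>U. Y v = gate_fun Y v" and Y': "\<forall>v\<in>U. Y' v = gate_fun Y' v"
    and closed: "\<forall>v\<in>U. inputs v \<subseteq> U \<union> B" and boundary: "\<forall>u\<in>B. Y u = Y' u"
  shows "v \<in> U \<Longrightarrow> Y v = Y' v"
proof (induction "rank v" arbitrary: v rule: less_induct)
  case less
  have "gate_fun Y v = gate_fun Y' v"
  proof (rule gate_fun_cong)
    fix u assume u: "u \<in> inputs v"
    then have "rank u < rank v"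
      using rank_inputs U less.prems by blast
    then show "Y u = Y' u"
      using u closed boundary less by blast
  qed
  then show ?case
    using Y Y' less.prems by simp
qed

definition sweep :: "vtx set \<Rightarrow> vtx list" where
  "sweep U = Lv 0 # topo_word U"

lemma set_sweep:
  assumes "U \<subseteq> V - {Lv 0}"
  shows "set (sweep U) \<subseteq> V"
proof -
  have "finite U"
    using assms finite_subset[OF _ finite_F_verts] by blast
  then show ?thesis
    using assms topo_word(1) by (auto simp: sweep_def)
qed

lemma upd_sweep:
  assumes "U \<subseteq> V - {Lv 0}"
  shows "upd_word net (sweep U) X (Lv 0) = (\<not> X (Cv 1))"
    and "v \<notin> U \<Longrightarrow> v \<noteq> Lv 0 \<Longrightarrow> upd_word net (sweep U) X v = X v"
    and "v \<in> U \<Longrightarrow> upd_word net (sweep U) X v = gate_fun (upd_word net (sweep U) X) v"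
proof -
  have "finite U"
    using assms finite_subset[OF _ finite_F_verts] by blast
  note w = topo_word[OF this]
  have "upd_word net (sweep U) X = upd_word net (topo_word U) (X(Lv 0 := \<not> X (Cv 1)))"
    by (simp add: sweep_def upd_at_def gate_fun_def)
  moreover note upd_word_topo[OF w(2,3), of "X(Lv 0 := \<not> X (Cv 1))"]
  ultimately show "upd_word net (sweep U) X (Lv 0) = (\<not> X (Cv 1))"
    and "v \<notin> U \<Longrightarrow> v \<noteq> Lv 0 \<Longrightarrow> upd_word net (sweep U) X v = X v"
    and "v \<in> U \<Longrightarrow> upd_word net (sweep U) X v = gate_fun (upd_word net (sweep U) X) v"
    using assms w(1) by auto
qed

(* Any start with value \<not> y at c_1 would do, see sweep_all. *)
definition fp :: "bool \<Rightarrow> vtx \<Rightarrow> bool" where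
  "fp y = upd_word net (sweep (V - {Lv 0})) (\<lambda>v. v = Cv 1 \<and> \<not> y)"

lemma fp_states: "fp y \<in> states V"
  unfolding fp_def using clauses_ne by (intro upd_word_states[OF is_BN_net]) (simp add: states_def)

lemma fp_Lv0 [simp]: "fp y (Lv 0) = y"
  unfolding fp_def by (simp add: upd_sweep(1))

lemma fp_eq: "v \<in> V \<Longrightarrow> v \<noteq> Lv 0 \<Longrightarrow> fp y v = gate_fun (fp y) v"
  unfolding fp_def by (simp add: upd_sweep(3))

lemma fixed_point_unique:
  assumes Y: "Y \<in> states V" and fixed: "\<forall>v\<in>V - {Lv 0}. Y v = gate_fun Y v"
  shows "Y = fp (Y (Lv 0))"
proof
  fix v
  show "Y v = fp (Y (Lv 0)) v"
  proof (cases "v \<in> V - {Lv 0}")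
    case True
    have "\<forall>v\<in>V - {Lv 0}. inputs v \<subseteq> (V - {Lv 0}) \<union> {Lv 0}"
      using inputs_in_V by blast
    then show ?thesis
      using fixed fp_eq True by (intro fixed_points_agree[of "V - {Lv 0}" _ _ "{Lv 0}"]) auto
  next
    case False
    then show ?thesis
      using Y fp_states by (auto simp: states_def)
  qed
qed

lemma sweep_all:
  assumes "X \<in> states V"
  shows "upd_word net (sweep (V - {Lv 0})) X = fp (\<not> X (Cv 1))"
proof -
  let ?Y = "upd_word net (sweep (V - {Lv 0})) X"
  have "?Y = fp (?Y (Lv 0))"
    using upd_word_states[OF is_BN_net assms] upd_sweep(3)
    by (intro fixed_point_unique) auto
  then show ?thesis
    by (simp add: upd_sweep(1))
qed

lemma fp_mono: "fp False v \<Longrightarrow> fp True v"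
proof (induction "rank v" arbitrary: v rule: less_induct)
  case less
  show ?case
  proof (cases "v \<in> V - {Lv 0}")
    case True
    have "gate_fun (fp True) v"
    proof (rule gate_fun_mono)
      show "gate_fun (fp False) v"
        using less.prems fp_eq True by simp
      show "fp False u \<Longrightarrow> fp True u" if "u \<in> inputs v" for u
        using less.hyps rank_inputs True that by blast
    qed (use True in simp)
    then show ?thesis
      using fp_eq True by simp
  next
    case False
    then show ?thesis
      using less.prems fp_states[of False] by (auto simp: states_def)
  qed
qed

definition live :: "vtx \<Rightarrow> bool" where
  "live v \<longleftrightarrow> fp True v \<noteq> fp False v"

lemma fp_live: "live v \<Longrightarrow> fp y v = y"
  using fp_mono[of v] by (cases y) (auto simp: live_def)

lemma fp_Qv:
  assumes "s \<in> {1..m}"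
  shows "fp y (Qv s) = fp y (Mu s)"
proof -
  have "fp y (QPv s) = fp y (Mu s)"
    using fp_eq[of "QPv s" y] assms by simp
  then show ?thesis
    using fp_eq[of "Qv s" y] assms by simp
qed

definition mergeable :: bool where
  "mergeable \<longleftrightarrow> (\<exists>w. set w \<subseteq> V \<and> upd_word net w (fp True) (Cv 1) = upd_word net w (fp False) (Cv 1))"

lemma mergeable_synchronizing:
  assumes mergeable
  shows "synchronizing V net"
proof -
  obtain w where w: "set w \<subseteq> V"
    and merge: "upd_word net w (fp True) (Cv 1) = upd_word net w (fp False) (Cv 1)"
    using assms unfolding mergeable_def by blast
  let ?sw = "sweep (V - {Lv 0})"
  define c where "c = upd_word net w (fp True) (Cv 1)"
  have "upd_word net (?sw @ w @ ?sw) X = fp (\<not> c)" if X: "X \<in> states V" for X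
  proof -
    have "upd_word net (?sw @ w @ ?sw) X = upd_word net ?sw (upd_word net w (fp (\<not> X (Cv 1))))"
      by (simp add: upd_word_append sweep_all[OF X])
    also have "\<dots> = fp (\<not> upd_word net w (fp (\<not> X (Cv 1))) (Cv 1))"
      by (rule sweep_all[OF upd_word_states[OF is_BN_net fp_states]])
    also have "upd_word net w (fp (\<not> X (Cv 1))) (Cv 1) = c"
      using merge by (cases "X (Cv 1)") (simp_all add: c_def)
    finally show ?thesis .
  qed
  moreover have "set (?sw @ w @ ?sw) \<subseteq> V"
    using w set_sweep[of "V - {Lv 0}"] by auto
  ultimately show ?thesis
    unfolding synchronizing_def by blast
qed

lemma Cv_chain_agree:
  assumes k: "k \<in> {1..m}"
    and Y: "\<forall>s\<in>{1..k}. Y (Cv s) = gate_fun Y (Cv s)" and Y': "\<forall>s\<in>{1..k}. Y' (Cv s) = gate_fun Y' (Cv s)"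
    and Cv_k: "Y (Cv k) = Y' (Cv k)" and Qv: "\<forall>s\<in>{1..<k}. Y (Qv s) = Y' (Qv s)"
  shows "Y (Cv 1) = Y' (Cv 1)"
proof (cases "k = 1")
  case True
  then show ?thesis
    using Cv_k by simp
next
  case False
  have "\<forall>v\<in>Cv ` {1..<k}. inputs v \<subseteq> Cv ` {1..<k} \<union> ({Cv k} \<union> Qv ` {1..<k})"
    using k by (auto simp: inputs_simps cnext_def)
  moreover have "Cv ` {1..<k} \<subseteq> V - {Lv 0}"
    using k by auto
  ultimately show ?thesis
    using False k Y Y' Cv_k Qv
    by (intro fixed_points_agree[of "Cv ` {1..<k}" _ _ "{Cv k} \<union> Qv ` {1..<k}"]) auto
qed

lemma sweep_fp_closed:
  assumes live: "live (Cv 1)" and U: "U \<subseteq> V - {Lv 0}" "W \<subseteq> U"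
    and closed: "\<forall>v\<in>W. inputs v \<subseteq> W \<union> {Lv 0}" and v: "v \<in> W"
  shows "upd_word net (sweep U) (fp y) v = fp (\<not> y) v"
proof (rule fixed_points_agree[of W _ _ "{Lv 0}", OF _ _ _ closed _ v])
  show "W \<subseteq> V - {Lv 0}"
    using U by blast
  show "\<forall>v\<in>W. upd_word net (sweep U) (fp y) v = gate_fun (upd_word net (sweep U) (fp y)) v"
    using U upd_sweep(3) by blast
  show "\<forall>v\<in>W. fp (\<not> y) v = gate_fun (fp (\<not> y)) v"
    using U fp_eq by blast
  show "\<forall>u\<in>{Lv 0}. upd_word net (sweep U) (fp y) u = fp (\<not> y) u"
    using upd_sweep(1)[OF U(1)] fp_live[OF live] by simp
qed

lemma mergeable_if_Cv_agree:
  assumes U: "U \<subseteq> V - {Lv 0}" and k: "k \<in> {1..m}" and Cv: "Cv ` {1..k} \<subseteq> U"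
    and Cv_k: "upd_word net (sweep U) (fp True) (Cv k) = upd_word net (sweep U) (fp False) (Cv k)"
    and Qv: "\<forall>s\<in>{1..<k}. upd_word net (sweep U) (fp True) (Qv s) = upd_word net (sweep U) (fp False) (Qv s)"
  shows mergeable
proof -
  have "\<forall>s\<in>{1..k}. upd_word net (sweep U) X (Cv s) = gate_fun (upd_word net (sweep U) X) (Cv s)" for X
    using Cv upd_sweep(3)[OF U] by blast
  then have "upd_word net (sweep U) (fp True) (Cv 1) = upd_word net (sweep U) (fp False) (Cv 1)"
    using Cv_chain_agree[OF k _ _ Cv_k Qv] by blast
  then show ?thesis
    unfolding mergeable_def using set_sweep[OF U] by blast
qed

(* Skipping q'_s0 leaves it at fp y (mu_s0) = y while mu_s0 flips to \<not> y, so q_s0, and then c_s0,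
   no longer depend on y. *)
lemma mergeable_if_live_Qv_steady_next:
  assumes live1: "live (Cv 1)" and s0: "s0 \<in> {1..m}" and live_Qv: "live (Qv s0)"
    and below: "\<forall>s\<in>{1..<s0}. \<not> live (Qv s)" and next_steady: "\<not> live (cnext n cs s0)"
  shows mergeable
proof -
  define U where "U = V - {Lv 0, QPv s0}"
  let ?W = "V - {Lv 0} - ({QPv s0} \<union> {Qv s0} \<union> Cv ` {1..s0})"
  let ?Z = "\<lambda>y. upd_word net (sweep U) (fp y)"
  have U: "U \<subseteq> V - {Lv 0}" "?W \<subseteq> U"
    by (auto simp: U_def)
  note closed = inputs_closed_without_chain_prefix[OF s0 subset_refl]
  note flip = sweep_fp_closed[OF live1 U closed]
  have live_Mu: "live (Mu s0)"
    using live_Qv fp_Qv[OF s0] by (simp add: live_def)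
  have "Mu s0 \<in> ?W"
    using s0 by auto
  then have Mu: "?Z y (Mu s0) = (\<not> y)" for y
    using flip fp_live[OF live_Mu] by simp
  have "QPv s0 \<notin> U" "QPv s0 \<noteq> Lv 0" "fp y (QPv s0) = fp y (Mu s0)" for y
    using fp_eq[of "QPv s0" y] s0 by (simp_all add: U_def)
  then have QPv: "?Z y (QPv s0) = y" for y
    using upd_sweep(2)[OF U(1)] fp_live[OF live_Mu] by simp
  have "Qv s0 \<in> U"
    using s0 by (simp add: U_def)
  then have Qv: "?Z y (Qv s0) = (\<not> op (Qv s0))" for y
    using upd_sweep(3)[OF U(1), of "Qv s0"] Mu QPv by simp
  have "cnext n cs s0 \<in> ?W"
    using cnext_in_V[OF s0] by (auto simp: cnext_def)
  then have next_val: "?Z True (cnext n cs s0) = ?Z False (cnext n cs s0)"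
    using flip next_steady by (simp add: live_def)
  have "Cv s0 \<in> U"
    using s0 by (simp add: U_def)
  then have "?Z True (Cv s0) = ?Z False (Cv s0)"
    using upd_sweep(3)[OF U(1), of "Cv s0"] Qv next_val by simp
  moreover have "?Z True (Qv s) = ?Z False (Qv s)" if "s \<in> {1..<s0}" for s
  proof -
    have "Qv s \<in> ?W"
      using that s0 by auto
    then show ?thesis
      using flip below that by (simp add: live_def)
  qed
  ultimately show mergeable
    using s0 by (intro mergeable_if_Cv_agree[OF U(1) s0]) (auto simp: U_def)
qed

(* Skipping q_s0 leaves it at y while the successor of c_s0 flips to \<not> y. *)
lemma mergeable_if_live_Qv_live_next:
  assumes live1: "live (Cv 1)" and s0: "s0 \<in> {1..m}" and live_Qv: "live (Qv s0)"
    and below: "\<forall>s\<in>{1..<s0}. \<not> live (Qv s)" and next_live: "live (cnext n cs s0)"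
  shows mergeable
proof -
  define U where "U = V - {Lv 0, Qv s0}"
  let ?W = "V - {Lv 0} - ({Qv s0} \<union> Cv ` {1..s0})"
  let ?Z = "\<lambda>y. upd_word net (sweep U) (fp y)"
  have U: "U \<subseteq> V - {Lv 0}" "?W \<subseteq> U"
    by (auto simp: U_def)
  have closed: "\<forall>v\<in>?W. inputs v \<subseteq> ?W \<union> {Lv 0}"
    using inputs_closed_without_chain_prefix[OF s0 empty_subsetI] by simp
  note flip = sweep_fp_closed[OF live1 U closed]
  have "Qv s0 \<notin> U" "Qv s0 \<noteq> Lv 0"
    by (simp_all add: U_def)
  then have Qv: "?Z y (Qv s0) = y" for y
    using upd_sweep(2)[OF U(1)] fp_live[OF live_Qv] by simp
  have "cnext n cs s0 \<in> ?W"
    using cnext_in_V[OF s0] by (auto simp: cnext_def)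
  then have next_val: "?Z y (cnext n cs s0) = (\<not> y)" for y
    using flip fp_live[OF next_live] by simp
  have "Cv s0 \<in> U"
    using s0 by (simp add: U_def)
  then have "?Z y (Cv s0) = (\<not> op (Cv s0))" for y
    using upd_sweep(3)[OF U(1), of "Cv s0"] Qv next_val by simp
  moreover have "?Z True (Qv s) = ?Z False (Qv s)" if "s \<in> {1..<s0}" for s
  proof -
    have "Qv s \<in> ?W"
      using that s0 by auto
    then show ?thesis
      using flip below that by (simp add: live_def)
  qed
  ultimately show mergeable
    using s0 by (intro mergeable_if_Cv_agree[OF U(1) s0]) (auto simp: U_def)
qed

lemma steady_Lv_Suc:
  assumes "\<not> live (Lv r)" and "r < n"
  shows "\<not> live (Lv (Suc r))"
proof -
  have "fp y (Lit (Suc r) b) = gate (op (Lit (Suc r) b)) (fp y (Lv r)) t_val" for y b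
    using fp_eq[of "Lit (Suc r) b" y] fp_eq[of Tv y] assms(2) by simp
  then have "fp y (Lv (Suc r)) = gate (op (Lv (Suc r)))
      (gate (op (Lit (Suc r) True)) (fp y (Lv r)) t_val) (gate (op (Lit (Suc r) False)) (fp y (Lv r)) t_val)" for y
    using fp_eq[of "Lv (Suc r)" y] assms(2) by simp
  then show ?thesis
    using assms(1) by (simp add: live_def)
qed

lemma live_Lv_below:
  assumes "live (Lv n)" and "r \<le> n"
  shows "live (Lv r)"
proof (rule ccontr)
  assume "\<not> live (Lv r)"
  have "\<not> live (Lv j)" if "r \<le> j" "j \<le> n" for j
    using that
  proof (induction j rule: dec_induct)
    case base
    show ?case
      by (rule \<open>\<not> live (Lv r)\<close>)
  next
    case (step j)
    then show ?case
      using steady_Lv_Suc by simp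
  qed
  then show False
    using assms by blast
qed

lemma live_Lit_if_live_Lv:
  assumes "r \<in> {1..n}" and "live (Lv r)"
  shows "live (Lit r True) \<or> live (Lit r False)"
proof (rule ccontr)
  assume "\<not> ?thesis"
  then have "fp True (Lit r b) = fp False (Lit r b)" for b
    by (cases b) (auto simp: live_def)
  then show False
    using assms fp_eq[of "Lv r" True] fp_eq[of "Lv r" False] by (simp add: live_def)
qed

lemma live_Lv_n:
  assumes live1: "live (Cv 1)" and steady: "\<forall>s\<in>{1..m}. \<not> live (Qv s)"
  shows "live (Lv n)"
proof (rule ccontr)
  assume "\<not> live (Lv n)"
  moreover have "fp y (Cv m) = gate (op (Cv m)) (fp y (Qv m)) (fp y (Lv n))" for y
    using fp_eq[of "Cv m" y] clauses_ne by (simp add: cnext_def)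
  moreover have "fp True (Qv m) = fp False (Qv m)"
    using steady clauses_ne by (simp add: live_def)
  ultimately have Cv_m: "fp True (Cv m) = fp False (Cv m)"
    by (simp add: live_def)
  have Cv: "\<forall>s\<in>{1..m}. fp y (Cv s) = gate_fun (fp y) (Cv s)" for y
    by (intro ballI fp_eq) auto
  have "\<forall>s\<in>{1..<m}. fp True (Qv s) = fp False (Qv s)"
    using steady by (simp add: live_def)
  with Cv_m have "fp True (Cv 1) = fp False (Cv 1)"
    using clauses_ne by (intro Cv_chain_agree[OF _ Cv Cv]) auto
  then show False
    using live1 by (simp add: live_def)
qed

lemma satisfiable_if_Qv_steady:
  assumes live1: "live (Cv 1)" and steady: "\<forall>s\<in>{1..m}. \<not> live (Qv s)"
  shows "satisfiable n cs"
proof -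
  define z where "z r \<longleftrightarrow> \<not> live (Lit r True)" for r
  have live_lit: "live (litv l)" if "fst l \<in> {1..n}" "\<not> sat_lit z l" for l
  proof (cases l)
    case (Pair r b)
    have "live (Lit r True) \<or> live (Lit r False)"
      using live_Lit_if_live_Lv live_Lv_below[OF live_Lv_n[OF live1 steady]] that Pair by simp
    then show ?thesis
      using that Pair by (cases b) (auto simp: z_def sat_lit_def litv_def)
  qed
  have "sat_lit z (cl1 cs s) \<or> sat_lit z (cl2 cs s) \<or> sat_lit z (cl3 cs s)" if s: "s \<in> {1..m}" for s
  proof (rule ccontr)
    assume "\<not> ?thesis"
    then have "live (litv (cl1 cs s))" "live (litv (cl2 cs s))" "live (litv (cl3 cs s))"
      using live_lit wf_3cnf_clause[OF wf s] by auto
    then have "fp y (Mu s) = y" for y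
      using fp_eq[of "Mu s" y] fp_eq[of "MuP s" y] fp_live s by simp
    then have "live (Qv s)"
      using fp_Qv[OF s] by (simp add: live_def)
    then show False
      using steady s by blast
  qed
  then show ?thesis
    unfolding satisfiable_def by blast
qed

lemma unsat_mergeable:
  assumes "\<not> satisfiable n cs"
  shows mergeable
proof (cases "live (Cv 1)")
  case False
  then show ?thesis
    unfolding mergeable_def by (intro exI[of _ "[]"]) (simp add: live_def)
next
  case live1: True
  then have "\<exists>s. s \<in> {1..m} \<and> live (Qv s)"
    using satisfiable_if_Qv_steady assms by blast
  then obtain s0 where s0: "s0 \<in> {1..m}" "live (Qv s0)" and below: "\<forall>s\<in>{1..<s0}. \<not> live (Qv s)"
  proof (rule exE[OF exists_least_iff[THEN iffD1]])
    fix s0 assume "(s0 \<in> {1..m} \<and> live (Qv s0)) \<and> (\<forall>s<s0. \<not> (s \<in> {1..m} \<and> live (Qv s)))"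
    then show ?thesis
      by (intro that) auto
  qed
  show ?thesis
  proof (cases "live (cnext n cs s0)")
    case True
    then show ?thesis
      using mergeable_if_live_Qv_live_next[OF live1 s0 below] by blast
  next
    case False
    then show ?thesis
      using mergeable_if_live_Qv_steady_next[OF live1 s0 below] by blast
  qed
qed

end

context cnf3
begin

lemma synchronizing_if_unsat:
  assumes "\<not> satisfiable n cs" and "BN_on V (F_arcs n cs) f"
  shows "synchronizing V f"
proof -
  obtain t op where f: "\<forall>x\<in>states V. f x = gate_net.net n cs t op x"
    using BN_on_F_is_gate_net[OF assms(2)] by blast
  interpret N: gate_net n cs t op ..
  show ?thesis
    using synchronizing_cong[OF f N.is_BN_net] N.mergeable_synchronizing[OF N.unsat_mergeable[OF assms(1)]]
    by simp
qed

lemma not_synchronizing_if_sat: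
  assumes "satisfiable n cs"
  shows "\<exists>f. BN_on V (F_arcs n cs) f \<and> \<not> synchronizing V f"
proof -
  obtain z where "\<forall>s\<in>{1..m}. sat_lit z (cl1 cs s) \<or> sat_lit z (cl2 cs s) \<or> sat_lit z (cl3 cs s)"
    using assms unfolding satisfiable_def by blast
  then interpret W: sat_witness n cs z
    by unfold_locales
  show ?thesis
    using W.BN_on_net W.not_synchronizing by blast
qed

end

theorem theorem7:
  fixes n :: nat and cs :: "clause list"
  assumes "n \<ge> 2" and "length cs \<ge> 1" and "wf_3cnf n cs"
  shows "\<not> satisfiable n cs \<longleftrightarrow>
         (\<forall>f. BN_on (F_verts n cs) (F_arcs n cs) f \<longrightarrow> synchronizing (F_verts n cs) f)"
proof -
  interpret cnf3 n cs
    using assms by unfold_locales auto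
  show ?thesis
    using synchronizing_if_unsat not_synchronizing_if_sat by blast
qed

end
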